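(* Let $G$ be a simple graph with edge set $E$ and $t$ triangles, let $\epsilon\in(0,1)$ and $\widetilde{t}>0$. Let $P=(E_0,E_1)$ be any partition of $E$, and assign each triangle to its first edge (according to a fixed arbitrary predefined order on edges) that lies in $E_0$, if such exists; otherwise (all three edges in $E_1$) the triangle is not assigned. For an edge $e$ let $a_P(e)$ be the number of triangles assigned to $e$. Then $\sum_{e\in E}a_P(e)\le t$. Furthermore, if $|E_1|\le 3(\epsilon\widetilde{t})^{2/3}$ and $\widetilde{t}\in[t/4,t]$, then $\sum_{e\in E_0}a_P(e)\ge(1-12\epsilon)t$. *)

theory Defs
  imports Complex_Main
begin

definition simple_graph_edges :: "'a set set \<Rightarrow> bool" where
  "simple_graph_edges E \<longleftrightarrow> finite E \<and> (\<forall>e\<in>E. card e = 2)"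

definition triangles :: "'a set set \<Rightarrow> 'a set set" where
  "triangles E = {T. card T = 3 \<and> (\<forall>x\<in>T. \<forall>y\<in>T. x \<noteq> y \<longrightarrow> {x, y} \<in> E)}"

text \<open>The fixed order on edges is given by a ranking rank, injective on E.
  Triangle T is assigned to edge e iff e is the first edge of T (w.r.t. rank) lying in E0.\<close>
definition assigned_to :: "'a set set \<Rightarrow> ('a set \<Rightarrow> nat) \<Rightarrow> 'a set \<Rightarrow> 'a set \<Rightarrow> bool" where
  "assigned_to E0 rank T e \<longleftrightarrow>
     e \<in> E0 \<and> e \<subseteq> T \<and> (\<forall>e'\<in>E0. e' \<subseteq> T \<longrightarrow> rank e \<le> rank e')"

definition aP :: "'a set set \<Rightarrow> 'a set set \<Rightarrow> ('a set \<Rightarrow> nat) \<Rightarrow> 'a set \<Rightarrow> nat" where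
  "aP E E0 rank e = card {T \<in> triangles E. assigned_to E0 rank T e}"

end

theory Submission
  imports Defs
begin

(* Since rank is injective, every triangle is assigned to at most one edge, so the a_P(e) count
   pairwise disjoint sets of triangles and sum to at most t. A triangle with an edge in E0 is
   assigned to its first such edge, so the unassigned triangles are triangles of the graph E1.
   Counting, for each vertex v, the triangles through v once by the m edges opposite to v and
   once by the pairs of edges at v gives at most min(deg(v)^2, m) <= sqrt m * deg(v) of them;
   summing over v yields 3 t(G) <= 2 m sqrt m. For m = |E1| <= 3 (eps tt)^(2/3) this bounds the
   unassigned triangles by 2 sqrt 3 eps tt <= 12 eps t. *)

lemma triangle_at_vertex:
  assumes "T \<in> triangles E" "v \<in> T"
  obtains a b where "T = {v, a, b}" "v \<noteq> a" "v \<noteq> b" "a \<noteq> b"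
    and "{v, a} \<in> E" "{v, b} \<in> E" "{a, b} \<in> E"
proof -
  have "card (T - {v}) = 2"
    using assms by (simp add: triangles_def card_Diff_singleton)
  then obtain a b where ab: "T - {v} = {a, b}" "a \<noteq> b"
    by (metis card_2_iff)
  then have "T = {v, a, b}" "v \<noteq> a" "v \<noteq> b"
    using assms(2) by auto
  moreover have "\<forall>x\<in>T. \<forall>y\<in>T. x \<noteq> y \<longrightarrow> {x, y} \<in> E"
    using assms(1) by (simp add: triangles_def)
  ultimately show ?thesis
    using that ab(2) by simp
qed

lemma finite_Union_edges:
  assumes "simple_graph_edges E"
  shows "finite (\<Union>E)"
proof (rule finite_Union)
  show "finite E"
    using assms by (simp add: simple_graph_edges_def)
next
  fix e assume "e \<in> E"
  then have "card e = 2"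
    using assms by (simp add: simple_graph_edges_def)
  then show "finite e"
    by (intro card_ge_0_finite) simp
qed

lemma triangle_subset_Union_edges:
  assumes "T \<in> triangles E"
  shows "T \<subseteq> \<Union>E"
proof
  fix v assume "v \<in> T"
  with assms obtain a where "{v, a} \<in> E"
    by (elim triangle_at_vertex)
  then show "v \<in> \<Union>E" by blast
qed

lemma finite_triangles:
  assumes "simple_graph_edges E"
  shows "finite (triangles E)"
proof (rule finite_subset)
  show "triangles E \<subseteq> Pow (\<Union>E)"
    using triangle_subset_Union_edges by blast
  show "finite (Pow (\<Union>E))"
    using finite_Union_edges[OF assms] by simp
qed

lemma card_triangles_at_le_card_edges:
  assumes "finite E"
  shows "card {T \<in> triangles E. v \<in> T} \<le> card E"
proof (rule card_inj_on_le[where f = "\<lambda>T. T - {v}"])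
  show "inj_on (\<lambda>T. T - {v}) {T \<in> triangles E. v \<in> T}"
    by (auto simp: inj_on_def)
  show "(\<lambda>T. T - {v}) ` {T \<in> triangles E. v \<in> T} \<subseteq> E"
  proof clarify
    fix T assume "T \<in> triangles E" "v \<in> T"
    then obtain a b where "T = {v, a, b}" "v \<noteq> a" "v \<noteq> b" "{a, b} \<in> E"
      by (elim triangle_at_vertex)
    moreover from this have "T - {v} = {a, b}" by auto
    ultimately show "T - {v} \<in> E" by simp
  qed
qed (use assms in simp)

lemma card_triangles_at_le_degree_squared:
  assumes "finite E"
  shows "card {T \<in> triangles E. v \<in> T} \<le> (card {e \<in> E. v \<in> e})\<^sup>2"
proof -
  let ?D = "{e \<in> E. v \<in> e}"
  have "{T \<in> triangles E. v \<in> T} \<subseteq> (\<lambda>(f, g). f \<union> g) ` (?D \<times> ?D)"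
  proof clarify
    fix T assume "T \<in> triangles E" "v \<in> T"
    then obtain a b where "T = {v, a, b}" "{v, a} \<in> E" "{v, b} \<in> E"
      by (elim triangle_at_vertex)
    then show "T \<in> (\<lambda>(f, g). f \<union> g) ` (?D \<times> ?D)"
      by (intro rev_image_eqI[of "({v, a}, {v, b})"]) auto
  qed
  moreover have "finite ?D"
    using assms by simp
  ultimately have "card {T \<in> triangles E. v \<in> T} \<le> card ((\<lambda>(f, g). f \<union> g) ` (?D \<times> ?D))"
    by (intro card_mono) auto
  also have "\<dots> \<le> card (?D \<times> ?D)"
    by (rule card_image_le) (use \<open>finite ?D\<close> in simp)
  finally show ?thesis
    by (simp add: card_cartesian_product power2_eq_square)
qed

lemma min_square_le_sqrt_mult:
  fixes d m :: real
  assumes "0 \<le> d" "0 \<le> m"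
  shows "min (d\<^sup>2) m \<le> sqrt m * d"
proof (cases "d \<le> sqrt m")
  case True
  then have "d * d \<le> sqrt m * d"
    using assms(1) by (rule mult_right_mono)
  then show ?thesis
    by (simp add: power2_eq_square)
next
  case False
  then have "sqrt m * sqrt m \<le> sqrt m * d"
    using assms(2) by (intro mult_left_mono) auto
  then show ?thesis
    using assms(2) by simp
qed

lemma card_triangles_at_le:
  assumes "finite E"
  shows "real (card {T \<in> triangles E. v \<in> T}) \<le> sqrt (card E) * card {e \<in> E. v \<in> e}"
proof -
  have "real (card {T \<in> triangles E. v \<in> T}) \<le> min ((real (card {e \<in> E. v \<in> e}))\<^sup>2) (card E)"
    using card_triangles_at_le_degree_squared[OF assms] card_triangles_at_le_card_edges[OF assms]
    by (simp flip: of_nat_power)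
  also have "\<dots> \<le> sqrt (card E) * card {e \<in> E. v \<in> e}"
    by (rule min_square_le_sqrt_mult) simp_all
  finally show ?thesis .
qed

lemma card_triangles_le:
  assumes G: "simple_graph_edges E"
  shows "3 * real (card (triangles E)) \<le> 2 * real (card E) * sqrt (card E)"
proof -
  let ?V = "\<Union>E"
  have finE: "finite E"
    using G by (simp add: simple_graph_edges_def)
  have degree_sum: "(\<Sum>v\<in>?V. card {e \<in> E. v \<in> e}) = 2 * card E"
  proof (rule sum_multicount[OF finite_Union_edges[OF G] finE], rule ballI)
    fix e assume "e \<in> E"
    then have "{v \<in> ?V. v \<in> e} = e" by auto
    then show "card {v \<in> ?V. v \<in> e} = 2"
      using G \<open>e \<in> E\<close> by (simp add: simple_graph_edges_def)
  qed
  have triangle_sum: "(\<Sum>v\<in>?V. card {T \<in> triangles E. v \<in> T}) = 3 * card (triangles E)"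
  proof (rule sum_multicount[OF finite_Union_edges[OF G] finite_triangles[OF G]], rule ballI)
    fix T assume "T \<in> triangles E"
    then have "{v \<in> ?V. v \<in> T} = T"
      using triangle_subset_Union_edges by blast
    then show "card {v \<in> ?V. v \<in> T} = 3"
      using \<open>T \<in> triangles E\<close> by (simp add: triangles_def)
  qed
  have "3 * real (card (triangles E)) = (\<Sum>v\<in>?V. real (card {T \<in> triangles E. v \<in> T}))"
    unfolding of_nat_sum [symmetric] triangle_sum by simp
  also have "\<dots> \<le> (\<Sum>v\<in>?V. sqrt (card E) * card {e \<in> E. v \<in> e})"
    by (intro sum_mono card_triangles_at_le finE)
  also have "\<dots> = 2 * real (card E) * sqrt (card E)"
    by (simp add: degree_sum flip: sum_distrib_left of_nat_sum)
  finally show ?thesis .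
qed

lemma mult_sqrt_le_if_le_powr:
  fixes m x :: real
  assumes "0 \<le> m" "m \<le> 3 * x powr (2/3)" "0 < x"
  shows "m * sqrt m \<le> 3 * sqrt 3 * x"
proof -
  define y where "y = x powr (2/3)"
  have "0 \<le> y"
    by (simp add: y_def)
  have "m * sqrt m \<le> (3 * y) * sqrt (3 * y)"
    using assms(1,2) by (intro mult_mono) (simp_all add: y_def)
  also have "\<dots> = 3 * sqrt 3 * (y * sqrt y)"
    by (simp add: real_sqrt_mult)
  also have "y * sqrt y = y powr 1 * y powr (1/2)"
    using \<open>0 \<le> y\<close> by (cases "y = 0") (simp_all add: powr_half_sqrt)
  also have "\<dots> = y powr (3/2)"
    by (subst powr_add [symmetric]) simp
  also have "\<dots> = x"
    using assms(3) by (simp add: y_def powr_powr)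
  finally show ?thesis .
qed

lemma card_triangles_le_if_card_edges_le:
  fixes x :: real
  assumes "simple_graph_edges E" "card E \<le> 3 * x powr (2/3)" "0 < x"
  shows "card (triangles E) \<le> 2 * sqrt 3 * x"
  using card_triangles_le[OF assms(1)] mult_sqrt_le_if_le_powr[OF _ assms(2,3)] by simp

definition assigned_triangles :: "'a set set \<Rightarrow> 'a set set \<Rightarrow> ('a set \<Rightarrow> nat) \<Rightarrow> 'a set set" where
  "assigned_triangles E E0 rank = {T \<in> triangles E. \<exists>e. assigned_to E0 rank T e}"

lemma assigned_triangles_subset: "assigned_triangles E E0 rank \<subseteq> triangles E"
  by (auto simp: assigned_triangles_def)

lemma assigned_to_unique:
  assumes "inj_on rank E0" "assigned_to E0 rank T e" "assigned_to E0 rank T e'"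
  shows "e = e'"
proof -
  have "rank e = rank e'"
    using assms(2,3) by (auto simp: assigned_to_def intro: antisym)
  then show ?thesis
    using assms by (auto simp: assigned_to_def dest: inj_onD)
qed

lemma sum_aP_eq_card_assigned_triangles:
  assumes "finite (triangles E)" "finite E0" "inj_on rank E0"
  shows "(\<Sum>e\<in>E0. aP E E0 rank e) = card (assigned_triangles E E0 rank)"
proof -
  have "assigned_triangles E E0 rank = (\<Union>e\<in>E0. {T \<in> triangles E. assigned_to E0 rank T e})"
    by (auto simp: assigned_triangles_def assigned_to_def)
  also have "card \<dots> = (\<Sum>e\<in>E0. card {T \<in> triangles E. assigned_to E0 rank T e})"
    using assms by (intro card_UN_disjoint) (auto dest: assigned_to_unique[OF assms(3)])
  finally show ?thesis
    by (simp add: aP_def)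
qed

lemma assigned_to_exists:
  assumes "e \<in> E0" "e \<subseteq> T"
  shows "\<exists>e'. assigned_to E0 rank T e'"
  using ex_has_least_nat[of "\<lambda>e. e \<in> E0 \<and> e \<subseteq> T" e rank] assms
  by (auto simp: assigned_to_def)

lemma triangles_subset_assigned_Un:
  assumes "E \<subseteq> E0 \<union> E1"
  shows "triangles E \<subseteq> assigned_triangles E E0 rank \<union> triangles E1"
proof
  fix T assume T: "T \<in> triangles E"
  show "T \<in> assigned_triangles E E0 rank \<union> triangles E1"
  proof (cases "T \<in> triangles E1")
    case False
    with T obtain x y where "x \<in> T" "y \<in> T" "{x, y} \<in> E" "{x, y} \<notin> E1"
      by (auto simp: triangles_def)
    then have "{x, y} \<in> E0" "{x, y} \<subseteq> T"
      using assms by auto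
    then show ?thesis
      using T by (auto simp: assigned_triangles_def dest: assigned_to_exists)
  qed simp
qed

lemma card_triangles_le_card_assigned_add:
  assumes "simple_graph_edges E" "simple_graph_edges E1" "E \<subseteq> E0 \<union> E1"
  shows "card (triangles E) \<le> card (assigned_triangles E E0 rank) + card (triangles E1)"
proof -
  have "card (triangles E) \<le> card (assigned_triangles E E0 rank \<union> triangles E1)"
    using assms finite_triangles[OF assms(1)] finite_triangles[OF assms(2)]
      finite_subset[OF assigned_triangles_subset]
    by (intro card_mono triangles_subset_assigned_Un) auto
  also have "\<dots> \<le> card (assigned_triangles E E0 rank) + card (triangles E1)"
    by (rule card_Un_le)
  finally show ?thesis .
qed

theorem claim3p5:
  fixes E E0 E1 :: "'a set set" and rank :: "'a set \<Rightarrow> nat"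
    and \<epsilon> tt :: real and t :: nat
  assumes G: "simple_graph_edges E"
    and t_def: "t = card (triangles E)"
    and eps: "0 < \<epsilon>" "\<epsilon> < 1"
    and tt_pos: "tt > 0"
    and part: "E0 \<union> E1 = E" "E0 \<inter> E1 = {}"
    and rank: "inj_on rank E"
  shows "(\<Sum>e\<in>E. aP E E0 rank e) \<le> t \<and>
         ((real (card E1) \<le> 3 * (\<epsilon> * tt) powr (2/3) \<and> real t / 4 \<le> tt \<and> tt \<le> real t)
           \<longrightarrow> (\<Sum>e\<in>E0. real (aP E E0 rank e)) \<ge> (1 - 12 * \<epsilon>) * real t)"
proof -
  have finE: "finite E" and G1: "simple_graph_edges E1"
    using G part by (auto simp: simple_graph_edges_def intro: finite_subset)
  have sum_E0: "(\<Sum>e\<in>E0. aP E E0 rank e) = card (assigned_triangles E E0 rank)"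
    using part finE finite_triangles[OF G] inj_on_subset[OF rank]
    by (intro sum_aP_eq_card_assigned_triangles) auto
  have "(\<Sum>e\<in>E. aP E E0 rank e) = (\<Sum>e\<in>E0. aP E E0 rank e)"
    using part finE by (intro sum.mono_neutral_right) (auto simp: aP_def assigned_to_def)
  also have "\<dots> \<le> t"
    unfolding sum_E0 t_def using finite_triangles[OF G] assigned_triangles_subset
    by (rule card_mono)
  finally have "(\<Sum>e\<in>E. aP E E0 rank e) \<le> t" .
  moreover have "(\<Sum>e\<in>E0. real (aP E E0 rank e)) \<ge> (1 - 12 * \<epsilon>) * real t"
    if "real (card E1) \<le> 3 * (\<epsilon> * tt) powr (2/3)" "tt \<le> real t"
  proof -
    have "t \<le> card (assigned_triangles E E0 rank) + card (triangles E1)"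
      unfolding t_def using G G1 part by (intro card_triangles_le_card_assigned_add) auto
    moreover have "card (triangles E1) \<le> 2 * sqrt 3 * (\<epsilon> * tt)"
      using G1 that(1) eps tt_pos by (intro card_triangles_le_if_card_edges_le) auto
    moreover have "2 * sqrt 3 * (\<epsilon> * tt) \<le> 12 * (\<epsilon> * t)"
      using eps tt_pos that(2) real_sqrt_le_iff[of 3 36] by (intro mult_mono) auto
    moreover have "(1 - 12 * \<epsilon>) * real t = real t - 12 * (\<epsilon> * t)"
      by (simp add: algebra_simps)
    ultimately show ?thesis
      unfolding of_nat_sum [symmetric] sum_E0 by linarith
  qed
  ultimately show ?thesis by blast
qed

end
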